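(* Let $A, C, D$ be binary random variables, with $A$ taking values $a,\overline{a}$, $C$ taking values $c,\overline{c}$, $D$ taking values $d,\overline{d}$, and let $Y$ be a real random variable with finite expectation. Suppose the joint distribution factorizes as \[ p(A,C,D,Y)=p(D)\,p(C\mid D)\,p(A\mid C)\,p(Y\mid A,C). \] Assume that $C$ and $D$ are dependent, and that every event $\{A=x, C=y, D=z\}$ has positive probability. If $E[Y\mid A,C]$ and $E[A\mid C]$ are both nondecreasing or both nonincreasing in $C$, then $E[Y\mid A,D]$ and $E[A\mid D]$ are both nondecreasing or both nonincreasing in $D$. If $E[Y\mid A,C]$ and $E[A\mid C]$ are one nondecreasing and the other nonincreasing in $C$, then $E[Y\mid A,D]$ and $E[A\mid D]$ are one nondecreasing and the other nonincreasing in $D$.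
   Context: $E[Y\mid A,C]$ is nondecreasing in $C$ if $E[Y\mid a,c]\ge E[Y\mid a,\overline{c}]$ and $E[Y\mid \overline{a},c]\ge E[Y\mid \overline{a},\overline{c}]$, nonincreasing if both inequalities are reversed; analogously for $D$. With $a=1,\overline{a}=0$, $E[A\mid C]=p(a\mid C)$ is nondecreasing in $C$ if $p(a\mid c)\ge p(a\mid\overline{c})$ and nonincreasing if $p(a\mid c)\le p(a\mid\overline{c})$; analogously for $D$. *)

theory Defs
  imports "HOL-Probability.Probability"
begin

text \<open>Binary random variables are modelled as bool-valued maps; the value True
  plays the role of a, c, d and False the role of the barred values.\<close>

definition ev :: "'a measure \<Rightarrow> ('a \<Rightarrow> bool) \<Rightarrow> 'a set" where
  "ev M P = {\<omega> \<in> space M. P \<omega>}"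

definition cond_prob :: "'a measure \<Rightarrow> ('a \<Rightarrow> bool) \<Rightarrow> ('a \<Rightarrow> bool) \<Rightarrow> real" where
  "cond_prob M P Q = measure M (ev M (\<lambda>\<omega>. P \<omega> \<and> Q \<omega>)) / measure M (ev M Q)"

definition cond_exp_ev :: "'a measure \<Rightarrow> ('a \<Rightarrow> real) \<Rightarrow> ('a \<Rightarrow> bool) \<Rightarrow> real" where
  "cond_exp_ev M Y Q = (\<integral>\<omega>. indicator (ev M Q) \<omega> * Y \<omega> \<partial>M) / measure M (ev M Q)"

definition EY_nondec :: "'a measure \<Rightarrow> ('a \<Rightarrow> real) \<Rightarrow> ('a \<Rightarrow> bool) \<Rightarrow> ('a \<Rightarrow> bool) \<Rightarrow> bool" where
  "EY_nondec M Y A X \<longleftrightarrow> (\<forall>x. cond_exp_ev M Y (\<lambda>\<omega>. A \<omega> = x \<and> X \<omega>)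
                                 \<ge> cond_exp_ev M Y (\<lambda>\<omega>. A \<omega> = x \<and> \<not> X \<omega>))"

definition EY_noninc :: "'a measure \<Rightarrow> ('a \<Rightarrow> real) \<Rightarrow> ('a \<Rightarrow> bool) \<Rightarrow> ('a \<Rightarrow> bool) \<Rightarrow> bool" where
  "EY_noninc M Y A X \<longleftrightarrow> (\<forall>x. cond_exp_ev M Y (\<lambda>\<omega>. A \<omega> = x \<and> X \<omega>)
                                 \<le> cond_exp_ev M Y (\<lambda>\<omega>. A \<omega> = x \<and> \<not> X \<omega>))"

text \<open>E[A | X] = p(a | X) nondecreasing / nonincreasing in X.\<close>
definition EA_nondec :: "'a measure \<Rightarrow> ('a \<Rightarrow> bool) \<Rightarrow> ('a \<Rightarrow> bool) \<Rightarrow> bool" where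
  "EA_nondec M A X \<longleftrightarrow> cond_prob M A X \<ge> cond_prob M A (\<lambda>\<omega>. \<not> X \<omega>)"

definition EA_noninc :: "'a measure \<Rightarrow> ('a \<Rightarrow> bool) \<Rightarrow> ('a \<Rightarrow> bool) \<Rightarrow> bool" where
  "EA_noninc M A X \<longleftrightarrow> cond_prob M A X \<le> cond_prob M A (\<lambda>\<omega>. \<not> X \<omega>)"

end

theory Submission
  imports Defs
begin

text \<open>Conditioning on D mixes the two values of C: p(a | D = z) is the mean of p(a | C = y)
  with weights p(y, z), and E[Y | A = x, D = z] is the mean of E[Y | A = x, C = y] with weights
  p(x | y) p(y, z) (here the factorization enters: given A and C, Y does not depend on D).
  For two weighted means of the same pair of values, the difference is the difference of the
  values times a positive multiple of the cross product of the weights, and in both cases this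
  cross product is a positive multiple of \<open>\<Delta> = p(c,d) p(c',d') - p(c,d') p(c',d)\<close>.
  So every D-difference is a C-difference times a positive multiple of \<open>\<Delta>\<close>: the two
  monotonicity directions are kept if \<open>\<Delta> > 0\<close> and both reversed if \<open>\<Delta> < 0\<close>.\<close>

lemma sets_ev [measurable]: "Measurable.pred M P \<Longrightarrow> ev M P \<in> sets M"
  unfolding ev_def by measurable

lemma integral_indicator_ev_eq_sum_cells:
  fixes A C D :: "'a \<Rightarrow> bool" and f :: "'a \<Rightarrow> real"
  assumes [measurable]: "A \<in> measurable M (count_space UNIV)"
    "C \<in> measurable M (count_space UNIV)" "D \<in> measurable M (count_space UNIV)"
    and f: "integrable M f"
  shows "(\<integral>\<omega>. indicator (ev M (\<lambda>\<omega>. R (A \<omega>) (C \<omega>) (D \<omega>))) \<omega> * f \<omega> \<partial>M)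
    = (\<Sum>x\<in>UNIV. \<Sum>y\<in>UNIV. \<Sum>z\<in>UNIV. of_bool (R x y z) *
         (\<integral>\<omega>. indicator (ev M (\<lambda>\<omega>. A \<omega> = x \<and> C \<omega> = y \<and> D \<omega> = z)) \<omega> * f \<omega> \<partial>M))"
proof -
  have cell_integrable: "integrable M (\<lambda>\<omega>.
      indicator (ev M (\<lambda>\<omega>. A \<omega> = x \<and> C \<omega> = y \<and> D \<omega> = z)) \<omega> * f \<omega>)" for x y z
    using integrable_real_mult_indicator[OF _ f] by (simp add: mult.commute)
  have cell_decomposition: "indicator (ev M (\<lambda>\<omega>. R (A \<omega>) (C \<omega>) (D \<omega>))) \<omega> * f \<omega>
     = (\<Sum>x\<in>UNIV. \<Sum>y\<in>UNIV. \<Sum>z\<in>UNIV. of_bool (R x y z) *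
         (indicator (ev M (\<lambda>\<omega>. A \<omega> = x \<and> C \<omega> = y \<and> D \<omega> = z)) \<omega> * f \<omega>))" for \<omega>
    by (cases "\<omega> \<in> space M"; cases "A \<omega>"; cases "C \<omega>"; cases "D \<omega>")
       (simp_all add: UNIV_bool ev_def of_bool_def)
  show ?thesis
    unfolding cell_decomposition using cell_integrable
    by (simp add: integral_sum integrable_sum del: sum_of_bool_mult_eq)
qed

lemma integral_indicator_mult_eq_scale:
  fixes Y :: "'a \<Rightarrow> real"
  assumes "finite_measure M" and [measurable]: "S \<in> sets M" "T \<in> sets M" "Y \<in> borel_measurable M"
    and "c \<ge> 0"
    and laws: "\<And>B. B \<in> sets borel \<Longrightarrow> measure M (S \<inter> Y -` B) = c * measure M (T \<inter> Y -` B)"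
  shows "(\<integral>\<omega>. indicator S \<omega> * Y \<omega> \<partial>M) = c * (\<integral>\<omega>. indicator T \<omega> * Y \<omega> \<partial>M)"
proof -
  interpret finite_measure M by fact
  define law where "law S = distr (density M (\<lambda>\<omega>. ennreal (indicator S \<omega>))) borel Y" for S
  have indicator_ennreal: "(\<lambda>\<omega>. ennreal (indicator S \<omega>)) = indicator S" for S :: "'a set"
    by (auto simp: indicator_def)
  have emeasure_law: "emeasure (law S) B = measure M (S \<inter> Y -` B)"
    if [measurable]: "S \<in> sets M" "B \<in> sets borel" for S B
  proof -
    have "emeasure (law S) B = emeasure M (S \<inter> (Y -` B \<inter> space M))"
      unfolding law_def indicator_ennreal by (simp add: emeasure_distr emeasure_restricted)
    also have "S \<inter> (Y -` B \<inter> space M) = S \<inter> Y -` B"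
      using sets.sets_into_space[OF that(1)] by blast
    finally show ?thesis
      by (simp add: emeasure_eq_measure)
  qed
  have integral_law: "integral\<^sup>L (law S) (\<lambda>y. y) = (\<integral>\<omega>. indicator S \<omega> * Y \<omega> \<partial>M)"
    if [measurable]: "S \<in> sets M" for S
    unfolding law_def by (simp add: integral_distr integral_density)
  have "law S = density (law T) (\<lambda>_. ennreal c)"
  proof (rule measure_eqI)
    fix B assume "B \<in> sets (law S)"
    then have [measurable]: "B \<in> sets borel"
      by (simp add: law_def)
    have "emeasure (density (law T) (\<lambda>_. ennreal c)) B = ennreal c * emeasure (law T) B"
      by (simp add: emeasure_density law_def nn_integral_cmult_indicator)
    also have "\<dots> = emeasure (law S) B"
      using \<open>c \<ge> 0\<close> by (simp add: emeasure_law laws ennreal_mult)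
    finally show "emeasure (law S) B = emeasure (density (law T) (\<lambda>_. ennreal c)) B"
      by simp
  qed (simp add: law_def)
  then have "integral\<^sup>L (law S) (\<lambda>y. y) = c * integral\<^sup>L (law T) (\<lambda>y. y)"
    using \<open>c \<ge> 0\<close> by (simp add: integral_density law_def)
  then show ?thesis
    by (simp add: integral_law)
qed

lemma weighted_mean_diff:
  fixes u w v :: "bool \<Rightarrow> real"
  assumes u: "\<And>b. u b > 0" and w: "\<And>b. w b > 0"
  shows "\<exists>k>0. (u True * v True + u False * v False) / (u True + u False)
                - (w True * v True + w False * v False) / (w True + w False)
              = k * (u True * w False - w True * u False) * (v True - v False)"
proof (intro exI conjI)
  have "u True + u False > 0" "w True + w False > 0"
    using u[of True] u[of False] w[of True] w[of False] by simp_all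
  then show "1 / ((u True + u False) * (w True + w False)) > 0"
    by simp
  show "(u True * v True + u False * v False) / (u True + u False)
          - (w True * v True + w False * v False) / (w True + w False)
        = 1 / ((u True + u False) * (w True + w False))
          * (u True * w False - w True * u False) * (v True - v False)"
    using \<open>u True + u False > 0\<close> \<open>w True + w False > 0\<close> by (simp add: field_simps)
qed

lemma monotonicity_transfer:
  fixes dY \<delta>Y :: "'b \<Rightarrow> real" and dA \<delta>A \<Delta> :: real
  assumes Y: "\<And>x. \<exists>k>0. dY x = k * \<Delta> * \<delta>Y x" and A: "\<exists>k>0. dA = k * \<Delta> * \<delta>A"
  shows "((\<forall>x. \<delta>Y x \<ge> 0) \<and> \<delta>A \<ge> 0 \<or> (\<forall>x. \<delta>Y x \<le> 0) \<and> \<delta>A \<le> 0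
            \<longrightarrow> (\<forall>x. dY x \<ge> 0) \<and> dA \<ge> 0 \<or> (\<forall>x. dY x \<le> 0) \<and> dA \<le> 0)
       \<and> ((\<forall>x. \<delta>Y x \<ge> 0) \<and> \<delta>A \<le> 0 \<or> (\<forall>x. \<delta>Y x \<le> 0) \<and> \<delta>A \<ge> 0
            \<longrightarrow> (\<forall>x. dY x \<ge> 0) \<and> dA \<le> 0 \<or> (\<forall>x. dY x \<le> 0) \<and> dA \<ge> 0)"
proof -
  have preserve: "(\<delta> \<ge> 0 \<longrightarrow> d \<ge> 0) \<and> (\<delta> \<le> 0 \<longrightarrow> d \<le> 0)"
    if "\<exists>k>0. d = k * \<Delta> * \<delta>" "\<Delta> \<ge> 0" for d \<delta> :: real
    using that by (auto simp: mult_nonneg_nonpos)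
  have reverse: "(\<delta> \<ge> 0 \<longrightarrow> d \<le> 0) \<and> (\<delta> \<le> 0 \<longrightarrow> d \<ge> 0)"
    if "\<exists>k>0. d = k * \<Delta> * \<delta>" "\<Delta> \<le> 0" for d \<delta> :: real
    using that by (auto simp: mult_nonneg_nonpos mult_nonpos_nonpos mult_nonpos_nonneg)
  show ?thesis
  proof (cases "\<Delta> \<ge> 0")
    case True
    show ?thesis using preserve[OF Y True] preserve[OF A True] by blast
  next
    case False
    then have "\<Delta> \<le> 0" by simp
    show ?thesis using reverse[OF Y \<open>\<Delta> \<le> 0\<close>] reverse[OF A \<open>\<Delta> \<le> 0\<close>] by blast
  qed
qed

locale binary_chain_model = prob_space M for M :: "'a measure" +
  fixes A C D :: "'a \<Rightarrow> bool" and Y :: "'a \<Rightarrow> real"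
  assumes A_measurable [measurable]: "A \<in> measurable M (count_space UNIV)"
    and C_measurable [measurable]: "C \<in> measurable M (count_space UNIV)"
    and D_measurable [measurable]: "D \<in> measurable M (count_space UNIV)"
    and integrable_Y: "integrable M Y"
    and factor: "\<And>x y z B. B \<in> sets borel \<Longrightarrow>
        measure M (ev M (\<lambda>\<omega>. A \<omega> = x \<and> C \<omega> = y \<and> D \<omega> = z \<and> Y \<omega> \<in> B))
        = measure M (ev M (\<lambda>\<omega>. D \<omega> = z))
          * cond_prob M (\<lambda>\<omega>. C \<omega> = y) (\<lambda>\<omega>. D \<omega> = z)
          * cond_prob M (\<lambda>\<omega>. A \<omega> = x) (\<lambda>\<omega>. C \<omega> = y)
          * cond_prob M (\<lambda>\<omega>. Y \<omega> \<in> B) (\<lambda>\<omega>. A \<omega> = x \<and> C \<omega> = y)"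
    and cell_pos: "\<And>x y z. measure M (ev M (\<lambda>\<omega>. A \<omega> = x \<and> C \<omega> = y \<and> D \<omega> = z)) > 0"
begin

abbreviation cell :: "bool \<Rightarrow> bool \<Rightarrow> bool \<Rightarrow> 'a set" where
  "cell x y z \<equiv> ev M (\<lambda>\<omega>. A \<omega> = x \<and> C \<omega> = y \<and> D \<omega> = z)"

abbreviation prob_A_given_C :: "bool \<Rightarrow> bool \<Rightarrow> real" where
  "prob_A_given_C x y \<equiv> cond_prob M (\<lambda>\<omega>. A \<omega> = x) (\<lambda>\<omega>. C \<omega> = y)"

abbreviation prob_CD :: "bool \<Rightarrow> bool \<Rightarrow> real" where
  "prob_CD y z \<equiv> measure M (ev M (\<lambda>\<omega>. C \<omega> = y \<and> D \<omega> = z))"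

abbreviation exp_Y_given_AC :: "bool \<Rightarrow> bool \<Rightarrow> real" where
  "exp_Y_given_AC x y \<equiv> cond_exp_ev M Y (\<lambda>\<omega>. A \<omega> = x \<and> C \<omega> = y)"

text \<open>For binary C and D this is the covariance of their indicators.\<close>

definition det_CD :: real where
  "det_CD = prob_CD True True * prob_CD False False - prob_CD True False * prob_CD False True"

lemma Y_measurable [measurable]: "Y \<in> borel_measurable M"
  using integrable_Y by (rule borel_measurable_integrable)

lemma measure_ev_eq_sum_cells:
  "measure M (ev M (\<lambda>\<omega>. R (A \<omega>) (C \<omega>) (D \<omega>)))
    = (\<Sum>x\<in>UNIV. \<Sum>y\<in>UNIV. \<Sum>z\<in>UNIV. of_bool (R x y z) * measure M (cell x y z))"
  using integral_indicator_ev_eq_sum_cells[of A M C D "\<lambda>_. 1" R]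
  by (simp del: sum_of_bool_mult_eq)

lemma integral_ev_eq_sum_cells:
  "(\<integral>\<omega>. indicator (ev M (\<lambda>\<omega>. R (A \<omega>) (C \<omega>) (D \<omega>))) \<omega> * Y \<omega> \<partial>M)
    = (\<Sum>x\<in>UNIV. \<Sum>y\<in>UNIV. \<Sum>z\<in>UNIV. of_bool (R x y z) * (\<integral>\<omega>. indicator (cell x y z) \<omega> * Y \<omega> \<partial>M))"
  using integral_indicator_ev_eq_sum_cells[OF A_measurable C_measurable D_measurable integrable_Y] .

lemma measure_pos_if_contains_cell:
  assumes "\<And>\<omega>. A \<omega> = x \<Longrightarrow> C \<omega> = y \<Longrightarrow> D \<omega> = z \<Longrightarrow> P \<omega>" and "Measurable.pred M P"
  shows "measure M (ev M P) > 0"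
proof -
  have "cell x y z \<subseteq> ev M P"
    using assms(1) by (auto simp: ev_def)
  then have "measure M (cell x y z) \<le> measure M (ev M P)"
    using assms(2) by (intro finite_measure_mono) measurable
  then show ?thesis
    using cell_pos[of x y z] by linarith
qed

lemma measure_AC_pos: "measure M (ev M (\<lambda>\<omega>. A \<omega> = x \<and> C \<omega> = y)) > 0"
  by (rule measure_pos_if_contains_cell[of x y True]) (simp, measurable)

lemma measure_C_pos: "measure M (ev M (\<lambda>\<omega>. C \<omega> = y)) > 0"
  by (rule measure_pos_if_contains_cell[of True y True]) (simp, measurable)

lemma measure_D_pos: "measure M (ev M (\<lambda>\<omega>. D \<omega> = z)) > 0"
  by (rule measure_pos_if_contains_cell[of True True z]) (simp, measurable)

lemma prob_CD_pos: "prob_CD y z > 0"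
  by (rule measure_pos_if_contains_cell[of True y z]) (simp, measurable)

lemma prob_A_given_C_pos: "prob_A_given_C x y > 0"
  unfolding cond_prob_def using measure_AC_pos measure_C_pos by simp

lemma measure_cell_vimage_eq:
  assumes "B \<in> sets borel"
  shows "measure M (cell x y z \<inter> Y -` B)
    = prob_A_given_C x y * prob_CD y z * cond_prob M (\<lambda>\<omega>. Y \<omega> \<in> B) (\<lambda>\<omega>. A \<omega> = x \<and> C \<omega> = y)"
proof -
  have "cell x y z \<inter> Y -` B = ev M (\<lambda>\<omega>. A \<omega> = x \<and> C \<omega> = y \<and> D \<omega> = z \<and> Y \<omega> \<in> B)"
    by (auto simp: ev_def)
  then show ?thesis
    using factor[OF assms, of x y z] measure_D_pos[of z] by (simp add: cond_prob_def)
qed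

lemma measure_cell_eq: "measure M (cell x y z) = prob_A_given_C x y * prob_CD y z"
proof -
  have "cond_prob M (\<lambda>\<omega>. Y \<omega> \<in> UNIV) (\<lambda>\<omega>. A \<omega> = x \<and> C \<omega> = y) = 1"
    unfolding cond_prob_def using measure_AC_pos[of x y] by simp
  then show ?thesis
    using measure_cell_vimage_eq[of UNIV x y z] by simp
qed

lemma integral_cell_eq:
  "(\<integral>\<omega>. indicator (cell x y z) \<omega> * Y \<omega> \<partial>M) = measure M (cell x y z) * exp_Y_given_AC x y"
proof -
  define AC where "AC = ev M (\<lambda>\<omega>. A \<omega> = x \<and> C \<omega> = y)"
  have [measurable]: "AC \<in> sets M" "cell x y z \<in> sets M"
    unfolding AC_def by measurable
  have AC_pos: "measure M AC > 0"
    unfolding AC_def by (rule measure_AC_pos)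
  have "(\<integral>\<omega>. indicator (cell x y z) \<omega> * Y \<omega> \<partial>M)
      = measure M (cell x y z) / measure M AC * (\<integral>\<omega>. indicator AC \<omega> * Y \<omega> \<partial>M)"
  proof (rule integral_indicator_mult_eq_scale)
    fix B :: "real set" assume "B \<in> sets borel"
    moreover have "ev M (\<lambda>\<omega>. Y \<omega> \<in> B \<and> A \<omega> = x \<and> C \<omega> = y) = AC \<inter> Y -` B"
      unfolding AC_def by (auto simp: ev_def)
    ultimately show "measure M (cell x y z \<inter> Y -` B)
        = measure M (cell x y z) / measure M AC * measure M (AC \<inter> Y -` B)"
      by (simp add: measure_cell_vimage_eq measure_cell_eq cond_prob_def AC_def)
  qed (use AC_pos in auto)
  then show ?thesis
    unfolding cond_exp_ev_def AC_def by simp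
qed

lemma prob_A_given_C_sum: "prob_A_given_C True y + prob_A_given_C False y = 1"
proof -
  have "prob_CD y True = (prob_A_given_C True y + prob_A_given_C False y) * prob_CD y True"
    using measure_ev_eq_sum_cells[of "\<lambda>_ c d. c = y \<and> d"]
    by (cases y) (simp_all add: UNIV_bool measure_cell_eq algebra_simps)
  then show ?thesis
    using prob_CD_pos[of y True] by simp
qed

lemma measure_D_eq: "measure M (ev M (\<lambda>\<omega>. D \<omega> = z)) = prob_CD True z + prob_CD False z"
proof -
  have "measure M (ev M (\<lambda>\<omega>. D \<omega> = z))
      = (prob_A_given_C True True + prob_A_given_C False True) * prob_CD True z
        + (prob_A_given_C True False + prob_A_given_C False False) * prob_CD False z"
    unfolding measure_ev_eq_sum_cells[of "\<lambda>_ _ d. d = z"] measure_cell_eq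
    by (cases z) (simp_all add: UNIV_bool algebra_simps)
  also have "\<dots> = prob_CD True z + prob_CD False z"
    unfolding prob_A_given_C_sum by simp
  finally show ?thesis .
qed

lemma cond_exp_given_AD:
  "cond_exp_ev M Y (\<lambda>\<omega>. A \<omega> = x \<and> D \<omega> = z)
    = (prob_A_given_C x True * prob_CD True z * exp_Y_given_AC x True
        + prob_A_given_C x False * prob_CD False z * exp_Y_given_AC x False)
      / (prob_A_given_C x True * prob_CD True z + prob_A_given_C x False * prob_CD False z)"
  unfolding cond_exp_ev_def[of M Y "\<lambda>\<omega>. A \<omega> = x \<and> D \<omega> = z"]
    integral_ev_eq_sum_cells[of "\<lambda>a _ d. a = x \<and> d = z"]
    measure_ev_eq_sum_cells[of "\<lambda>a _ d. a = x \<and> d = z"] integral_cell_eq measure_cell_eq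
  by (cases x; cases z) (simp_all add: UNIV_bool add.commute)

lemma cond_prob_A_given_D:
  "cond_prob M A (\<lambda>\<omega>. D \<omega> = z)
    = (prob_CD True z * prob_A_given_C True True + prob_CD False z * prob_A_given_C True False)
      / (prob_CD True z + prob_CD False z)"
  unfolding cond_prob_def[of M A] measure_D_eq
    measure_ev_eq_sum_cells[of "\<lambda>a _ d. a \<and> d = z"] measure_cell_eq
  by (cases z) (simp_all add: UNIV_bool mult.commute)

lemma cond_exp_given_AD_diff:
  "\<exists>k>0. cond_exp_ev M Y (\<lambda>\<omega>. A \<omega> = x \<and> D \<omega>) - cond_exp_ev M Y (\<lambda>\<omega>. A \<omega> = x \<and> \<not> D \<omega>)
    = k * det_CD * (cond_exp_ev M Y (\<lambda>\<omega>. A \<omega> = x \<and> C \<omega>) - cond_exp_ev M Y (\<lambda>\<omega>. A \<omega> = x \<and> \<not> C \<omega>))"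
proof -
  let ?a = "prob_A_given_C x"
  have weight_pos: "?a c * prob_CD c z > 0" for c z
    by (intro mult_pos_pos prob_A_given_C_pos prob_CD_pos)
  obtain k where "k > 0" and k:
    "cond_exp_ev M Y (\<lambda>\<omega>. A \<omega> = x \<and> D \<omega> = True) - cond_exp_ev M Y (\<lambda>\<omega>. A \<omega> = x \<and> D \<omega> = False)
      = k * (?a True * prob_CD True True * (?a False * prob_CD False False)
             - ?a True * prob_CD True False * (?a False * prob_CD False True))
          * (exp_Y_given_AC x True - exp_Y_given_AC x False)"
    using weighted_mean_diff[where u = "\<lambda>c. ?a c * prob_CD c True" and w = "\<lambda>c. ?a c * prob_CD c False"
        and v = "exp_Y_given_AC x", OF weight_pos weight_pos]
    unfolding cond_exp_given_AD by blast
  show ?thesis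
  proof (intro exI conjI)
    show "k * ?a True * ?a False > 0"
      using \<open>k > 0\<close> prob_A_given_C_pos[of x True] prob_A_given_C_pos[of x False] by simp
    show "cond_exp_ev M Y (\<lambda>\<omega>. A \<omega> = x \<and> D \<omega>) - cond_exp_ev M Y (\<lambda>\<omega>. A \<omega> = x \<and> \<not> D \<omega>)
        = k * ?a True * ?a False * det_CD
          * (cond_exp_ev M Y (\<lambda>\<omega>. A \<omega> = x \<and> C \<omega>) - cond_exp_ev M Y (\<lambda>\<omega>. A \<omega> = x \<and> \<not> C \<omega>))"
      using k unfolding det_CD_def by (simp add: algebra_simps)
  qed
qed

lemma cond_prob_A_given_D_diff:
  "\<exists>k>0. cond_prob M A D - cond_prob M A (\<lambda>\<omega>. \<not> D \<omega>)
    = k * det_CD * (cond_prob M A C - cond_prob M A (\<lambda>\<omega>. \<not> C \<omega>))"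
  using weighted_mean_diff[where u = "\<lambda>c. prob_CD c True" and w = "\<lambda>c. prob_CD c False"
      and v = "prob_A_given_C True", OF prob_CD_pos prob_CD_pos]
  unfolding cond_prob_A_given_D[symmetric] det_CD_def by simp

end

theorem theorem8:
  fixes M :: "'a measure" and A C D :: "'a \<Rightarrow> bool" and Y :: "'a \<Rightarrow> real"
  assumes "prob_space M"
    and "A \<in> measurable M (count_space UNIV)"
    and "C \<in> measurable M (count_space UNIV)"
    and "D \<in> measurable M (count_space UNIV)"
    and "Y \<in> borel_measurable M" and "integrable M Y"
    and factor: "\<And>x y z B. B \<in> sets borel \<Longrightarrow>
        measure M (ev M (\<lambda>\<omega>. A \<omega> = x \<and> C \<omega> = y \<and> D \<omega> = z \<and> Y \<omega> \<in> B))
        = measure M (ev M (\<lambda>\<omega>. D \<omega> = z))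
          * cond_prob M (\<lambda>\<omega>. C \<omega> = y) (\<lambda>\<omega>. D \<omega> = z)
          * cond_prob M (\<lambda>\<omega>. A \<omega> = x) (\<lambda>\<omega>. C \<omega> = y)
          * cond_prob M (\<lambda>\<omega>. Y \<omega> \<in> B) (\<lambda>\<omega>. A \<omega> = x \<and> C \<omega> = y)"
    and dep: "\<not> prob_space.indep_var M (count_space UNIV) C (count_space UNIV) D"
    and pos: "\<And>x y z. measure M (ev M (\<lambda>\<omega>. A \<omega> = x \<and> C \<omega> = y \<and> D \<omega> = z)) > 0"
  shows "((EY_nondec M Y A C \<and> EA_nondec M A C) \<or> (EY_noninc M Y A C \<and> EA_noninc M A C)
            \<longrightarrow> (EY_nondec M Y A D \<and> EA_nondec M A D) \<or> (EY_noninc M Y A D \<and> EA_noninc M A D))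
       \<and> ((EY_nondec M Y A C \<and> EA_noninc M A C) \<or> (EY_noninc M Y A C \<and> EA_nondec M A C)
            \<longrightarrow> (EY_nondec M Y A D \<and> EA_noninc M A D) \<or> (EY_noninc M Y A D \<and> EA_nondec M A D))"
proof -
  interpret prob_space M by fact
  interpret binary_chain_model M A C D Y
    using assms by unfold_locales auto
  show ?thesis
    unfolding EY_nondec_def EY_noninc_def EA_nondec_def EA_noninc_def
    using monotonicity_transfer[OF cond_exp_given_AD_diff cond_prob_A_given_D_diff]
    by simp
qed

end
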